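(* Let $\Phi$ be a randomized learning algorithm that maps a dataset to a feature extractor and is $(\epsilon_{\mathrm{DP}},\delta_{\mathrm{DP}})$-differentially private. For each feature extractor $\phi$, let $A(\cdot,\phi)$ be the algorithm that trains a linear model on the features produced by $\phi$ by minimizing the perturbed loss $L_{\mathbf{b}}$, and let $M$ be a removal mechanism that guarantees $(\epsilon_{\mathrm{CR}},\delta_{\mathrm{CR}})$-certified removal for $A(\cdot,\phi)$. Then the entire procedure (training $\phi=\Phi(\mathcal{D})$, training $A(\mathcal{D},\phi)$, and removing $\mathbf{x}\in\mathcal{D}$ via $M$, compared against $A(\mathcal{D}\setminus\mathbf{x},\Phi(\mathcal{D}\setminus\mathbf{x}))$) guarantees $(\epsilon_{\mathrm{DP}}+\epsilon_{\mathrm{CR}},\delta_{\mathrm{DP}}+\delta_{\mathrm{CR}})$-certified removal.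
   Context: $L_{\mathbf{b}}(\mathbf{w};\mathcal{D})=\sum_{i}\ell(\mathbf{w}^\top\phi(\mathbf{x}_i),y_i)+\frac{\lambda n}{2}\|\mathbf{w}\|_2^2+\mathbf{b}^\top\mathbf{w}$ with random $\mathbf{b}$. A randomized algorithm $\Phi$ is $(\epsilon,\delta)$-differentially private if for all datasets $\mathcal{D},\mathcal{D}''$ differing in one sample and all measurable sets $S$, $P(\Phi(\mathcal{D})\in S)\le e^{\epsilon}P(\Phi(\mathcal{D}'')\in S)+\delta$. For a randomized learning algorithm $A$ with model space $\mathcal{H}$ and a removal mechanism $M(A(\mathcal{D}),\mathcal{D},\mathbf{x})$, $M$ is $(\epsilon,\delta)$-certified removal for $A$ if for all measurable $\mathcal{T}\subseteq\mathcal{H}$, all datasets $\mathcal{D}$ and all $\mathbf{x}\in\mathcal{D}$: $P(M(A(\mathcal{D}),\mathcal{D},\mathbf{x})\in\mathcal{T})\le e^{\epsilon}P(A(\mathcal{D}\setminus\mathbf{x})\in\mathcal{T})+\delta$ and $P(A(\mathcal{D}\setminus\mathbf{x})\in\mathcal{T})\le e^{\epsilon}P(M(A(\mathcal{D}),\mathcal{D},\mathbf{x})\in\mathcal{T})+\delta$. *)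

theory Defs
  imports "HOL-Probability.Probability" "HOL-Library.Multiset"
begin

text \<open>Datasets are finite multisets of samples; removing a sample x from D is D - {#x#}.
  Two datasets differ in one sample if one is obtained from the other by adding one sample.\<close>

definition neighbors :: "'z multiset \<Rightarrow> 'z multiset \<Rightarrow> bool" where
  "neighbors D D' \<longleftrightarrow> (\<exists>z. D' = add_mset z D) \<or> (\<exists>z. D = add_mset z D')"

text \<open>A randomized algorithm is given by the output distribution for each dataset.\<close>

definition differentially_private ::
  "real \<Rightarrow> real \<Rightarrow> 'h measure \<Rightarrow> ('z multiset \<Rightarrow> 'h measure) \<Rightarrow> bool" where
  "differentially_private \<epsilon> \<delta> H Phi \<longleftrightarrow>
     (\<forall>D D'. neighbors D D' \<longrightarrow>
        (\<forall>S \<in> sets H. measure (Phi D) S \<le> exp \<epsilon> * measure (Phi D') S + \<delta>))"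

definition certified_removal ::
  "real \<Rightarrow> real \<Rightarrow> 'h measure \<Rightarrow> ('z multiset \<Rightarrow> 'h measure)
     \<Rightarrow> ('h \<Rightarrow> 'z multiset \<Rightarrow> 'z \<Rightarrow> 'h) \<Rightarrow> bool" where
  "certified_removal \<epsilon> \<delta> H A M \<longleftrightarrow>
     (\<forall>T \<in> sets H. \<forall>D. \<forall>x. x \<in># D \<longrightarrow>
        measure (distr (A D) H (\<lambda>h. M h D x)) T \<le> exp \<epsilon> * measure (A (D - {#x#})) T + \<delta> \<and>
        measure (A (D - {#x#})) T \<le> exp \<epsilon> * measure (distr (A D) H (\<lambda>h. M h D x)) T + \<delta>)"

definition perturbed_loss ::
  "(real \<Rightarrow> 'y \<Rightarrow> real) \<Rightarrow> real \<Rightarrow> ('x \<Rightarrow> 'f::euclidean_space)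
     \<Rightarrow> ('x \<times> 'y) multiset \<Rightarrow> 'f \<Rightarrow> 'f \<Rightarrow> real" where
  "perturbed_loss loss lam phi D b w =
     sum_mset (image_mset (\<lambda>(x, y). loss (w \<bullet> phi x) y) D)
     + lam * real (size D) / 2 * (norm w)\<^sup>2 + b \<bullet> w"

definition perturbed_minimizer ::
  "(real \<Rightarrow> 'y \<Rightarrow> real) \<Rightarrow> real \<Rightarrow> ('x \<Rightarrow> 'f::euclidean_space)
     \<Rightarrow> ('x \<times> 'y) multiset \<Rightarrow> 'f \<Rightarrow> 'f" where
  "perturbed_minimizer loss lam phi D b =
     (SOME w. \<forall>v. perturbed_loss loss lam phi D b w \<le> perturbed_loss loss lam phi D b v)"

definition full_training ::
  "'p measure \<Rightarrow> 'w measure \<Rightarrow> ('z multiset \<Rightarrow> 'p measure)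
     \<Rightarrow> ('z multiset \<Rightarrow> 'p \<Rightarrow> 'w measure) \<Rightarrow> 'z multiset \<Rightarrow> ('p \<times> 'w) measure" where
  "full_training F W Phi A D = Phi D \<bind> (\<lambda>phi. distr (A D phi) (F \<Otimes>\<^sub>M W) (\<lambda>w. (phi, w)))"

definition full_removal ::
  "('p \<Rightarrow> 'w \<Rightarrow> 'z multiset \<Rightarrow> 'z \<Rightarrow> 'w) \<Rightarrow> ('p \<times> 'w) \<Rightarrow> 'z multiset \<Rightarrow> 'z \<Rightarrow> ('p \<times> 'w)" where
  "full_removal M pw D x = (fst pw, M (fst pw) (snd pw) D x)"

end

theory Submission
  imports Defs
begin

(* Condition on the feature extractor phi. For fixed phi, certified removal bounds the probability
   of an event under the removed model by exp \<epsilon>CR times its probability under the retrained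
   model, plus \<delta>CR. Both probabilities are [0,1]-valued measurable functions of phi, and
   differential privacy of Phi, which extends from events to such functions by a staircase
   approximation, transfers this fibrewise bound to the mixtures over phi at the price of a
   factor exp \<epsilon>DP and an additive \<delta>DP. *)

definition indist_le :: "real \<Rightarrow> real \<Rightarrow> 'a measure \<Rightarrow> 'a measure \<Rightarrow> 'a measure \<Rightarrow> bool" where
  "indist_le \<epsilon> \<delta> N P Q \<longleftrightarrow> (\<forall>S\<in>sets N. measure P S \<le> exp \<epsilon> * measure Q S + \<delta>)"

lemma differentially_private_iff_indist_le:
  "differentially_private \<epsilon> \<delta> H Phi \<longleftrightarrow>
     (\<forall>D D'. neighbors D D' \<longrightarrow> indist_le \<epsilon> \<delta> H (Phi D) (Phi D'))"
  by (simp add: differentially_private_def indist_le_def)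

lemma certified_removal_iff_indist_le:
  "certified_removal \<epsilon> \<delta> H A M \<longleftrightarrow>
     (\<forall>D x. x \<in># D \<longrightarrow>
        indist_le \<epsilon> \<delta> H (distr (A D) H (\<lambda>h. M h D x)) (A (D - {#x#})) \<and>
        indist_le \<epsilon> \<delta> H (A (D - {#x#})) (distr (A D) H (\<lambda>h. M h D x)))"
  by (auto simp: certified_removal_def indist_le_def)

lemma indist_le_nonneg:
  assumes "indist_le \<epsilon> \<delta> N P Q"
  shows "0 \<le> \<delta>"
  using assms by (auto simp: indist_le_def dest: bspec[of _ _ "{}"])

lemma indist_le_distr:
  assumes PQ: "indist_le \<epsilon> \<delta> N P Q" and sets_P: "sets P = sets N" and sets_Q: "sets Q = sets N"
    and f: "f \<in> N \<rightarrow>\<^sub>M N'"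
  shows "indist_le \<epsilon> \<delta> N' (distr P N' f) (distr Q N' f)"
  unfolding indist_le_def
proof
  fix S assume "S \<in> sets N'"
  then have "f -` S \<inter> space N \<in> sets N" by (rule measurable_sets[OF f])
  then show "measure (distr P N' f) S \<le> exp \<epsilon> * measure (distr Q N' f) S + \<delta>"
    using PQ \<open>S \<in> sets N'\<close> f sets_eq_imp_space_eq[OF sets_P] sets_eq_imp_space_eq[OF sets_Q]
    by (simp add: indist_le_def measure_distr measurable_cong_sets[OF sets_P refl]
        measurable_cong_sets[OF sets_Q refl])
qed

lemma integrable_prob_algebra_bounded:
  fixes f :: "'a \<Rightarrow> real"
  assumes P: "P \<in> space (prob_algebra F)" and f: "f \<in> borel_measurable F"
    and bounded: "\<And>x. x \<in> space F \<Longrightarrow> \<bar>f x\<bar> \<le> B"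
  shows "integrable P f"
proof -
  have "sets P = sets F" and "prob_space P" using P by (auto simp: space_prob_algebra)
  then show ?thesis
    using f bounded sets_eq_imp_space_eq[of P F]
    by (intro finite_measure.integrable_const_bound[where B=B])
       (auto simp: prob_space_def measurable_cong_sets[of P F])
qed

lemma measure_bind_prob_algebra:
  assumes P: "P \<in> space (prob_algebra F)" and R: "R \<in> F \<rightarrow>\<^sub>M prob_algebra N"
    and T: "T \<in> sets N"
  shows "measure (P \<bind> R) T = (\<integral>x. measure (R x) T \<partial>P)"
proof -
  have sets_P: "sets P = sets F" using P by (simp add: space_prob_algebra)
  have R_prob: "prob_space (R x)" if "x \<in> space F" for x
    using measurable_space[OF R that] by (simp add: space_prob_algebra)
  have "emeasure (P \<bind> R) T = (\<integral>\<^sup>+x. emeasure (R x) T \<partial>P)"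
    by (rule emeasure_bind_prob_algebra[OF P R T])
  also have "\<dots> = (\<integral>\<^sup>+x. ennreal (measure (R x) T) \<partial>P)"
    using R_prob sets_eq_imp_space_eq[OF sets_P]
    by (intro nn_integral_cong) (simp add: prob_space_def finite_measure.emeasure_eq_measure)
  also have "\<dots> = ennreal (\<integral>x. measure (R x) T \<partial>P)"
    using R_prob T
    by (intro nn_integral_eq_integral integrable_prob_algebra_bounded[OF P, where B=1])
       (auto intro: measurable_compose[OF R] simp: prob_space.prob_le_1)
  finally show ?thesis
    unfolding measure_def by (simp add: integral_nonneg_AE)
qed

lemma staircase_bounds:
  fixes y :: real
  assumes y: "0 \<le> y" "y \<le> 1" and n: "n > 0"
  shows "(\<Sum>k\<in>{1..n}. of_bool (real k \<le> real n * y)) / real n \<le> y"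
    and "y - 1 / real n \<le> (\<Sum>k\<in>{1..n}. of_bool (real k \<le> real n * y)) / real n"
proof -
  define q where "q = real (nat \<lfloor>real n * y\<rfloor>)"
  have "real n * y \<le> real n"
    using y by (simp add: mult_left_le)
  moreover have "real k \<le> real n * y \<longleftrightarrow> k \<le> nat \<lfloor>real n * y\<rfloor>" for k
    using y by (simp add: le_nat_iff le_floor_iff)
  ultimately have "{1..n} \<inter> {k. real k \<le> real n * y} = {1..nat \<lfloor>real n * y\<rfloor>}"
    by force
  then have sum_eq: "(\<Sum>k\<in>{1..n}. of_bool (real k \<le> real n * y)) = q"
    by (simp add: q_def)
  have "0 \<le> real n * y"
    using y by simp
  then have "q \<le> real n * y" "real n * y - 1 \<le> q"
    unfolding q_def by linarith+
  with n show "(\<Sum>k\<in>{1..n}. of_bool (real k \<le> real n * y)) / real n \<le> y"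
    unfolding sum_eq by (simp add: pos_divide_le_eq algebra_simps)
  have "y - 1 / real n = (real n * y - 1) / real n"
    using n by (simp add: field_simps)
  with \<open>real n * y - 1 \<le> q\<close> n
  show "y - 1 / real n \<le> (\<Sum>k\<in>{1..n}. of_bool (real k \<le> real n * y)) / real n"
    unfolding sum_eq by (simp add: divide_right_mono)
qed

lemma integral_sum_indicator_le_of_indist_le:
  assumes P: "P \<in> space (prob_algebra F)" and Q: "Q \<in> space (prob_algebra F)"
    and PQ: "indist_le \<epsilon> \<delta> F P Q"
    and K: "finite K" and S: "\<And>k. k \<in> K \<Longrightarrow> S k \<in> sets F"
  shows "(\<integral>x. (\<Sum>k\<in>K. indicator (S k) x) \<partial>P)
      \<le> exp \<epsilon> * (\<integral>x. (\<Sum>k\<in>K. indicator (S k) x) \<partial>Q) + real (card K) * \<delta>"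
proof -
  have integral: "(\<integral>x. (\<Sum>k\<in>K. indicator (S k) x) \<partial>\<mu>) = (\<Sum>k\<in>K. measure \<mu> (S k))"
    if \<mu>: "\<mu> \<in> space (prob_algebra F)" for \<mu>
  proof -
    have "space \<mu> = space F"
      using \<mu> by (intro sets_eq_imp_space_eq) (simp add: space_prob_algebra)
    moreover have "integrable \<mu> (indicator (S k) :: _ \<Rightarrow> real)" if "k \<in> K" for k
      using S[OF that] by (intro integrable_prob_algebra_bounded[OF \<mu>, where B=1]) auto
    ultimately show ?thesis
      using S by (simp add: Int_absorb2 sets.sets_into_space)
  qed
  have "(\<Sum>k\<in>K. measure P (S k)) \<le> (\<Sum>k\<in>K. exp \<epsilon> * measure Q (S k) + \<delta>)"
    using PQ S by (intro sum_mono) (simp add: indist_le_def)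
  also have "\<dots> = exp \<epsilon> * (\<Sum>k\<in>K. measure Q (S k)) + real (card K) * \<delta>"
    by (simp add: sum.distrib sum_distrib_left)
  finally show ?thesis
    by (simp only: integral[OF P] integral[OF Q])
qed

lemma integral_le_of_indist_le_approx:
  fixes f :: "'a \<Rightarrow> real"
  assumes P: "P \<in> space (prob_algebra F)" and Q: "Q \<in> space (prob_algebra F)"
    and PQ: "indist_le \<epsilon> \<delta> F P Q"
    and f[measurable]: "f \<in> borel_measurable F"
    and f_range: "\<And>x. x \<in> space F \<Longrightarrow> 0 \<le> f x \<and> f x \<le> 1"
    and n: "n > 0"
  shows "(\<integral>x. f x \<partial>P) \<le> exp \<epsilon> * (\<integral>x. f x \<partial>Q) + \<delta> + 1 / real n"
proof -
  define S where "S k = {x\<in>space F. real k \<le> real n * f x}" for k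
  have S[measurable]: "S k \<in> sets F" for k
    unfolding S_def by measurable
  \<comment> \<open>The staircase \<lfloor>n f\<rfloor> / n, written as an average of indicators of superlevel sets.\<close>
  define s where "s x = (\<Sum>k\<in>{1..n}. indicator (S k) x) / real n" for x
  have s_le: "s x \<le> f x" and s_ge: "f x - 1 / real n \<le> s x" if "x \<in> space F" for x
    using staircase_bounds[of "f x" n] f_range[OF that] n that
    by (simp_all add: s_def S_def indicator_def)
  have s_measurable[measurable]: "s \<in> borel_measurable F"
    unfolding s_def by measurable
  have s_range: "0 \<le> s x \<and> s x \<le> 1" if "x \<in> space F" for x
    using s_le[OF that] f_range[OF that] unfolding s_def by (simp add: sum_nonneg)
  have int_P: "integrable P f" "integrable P s" and int_Q: "integrable Q f" "integrable Q s"
    using f_range s_range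
    by (auto intro!: integrable_prob_algebra_bounded[OF P, where B=1]
        integrable_prob_algebra_bounded[OF Q, where B=1])
  have space_P: "space P = space F" and space_Q: "space Q = space F" and "finite_measure P"
    using P Q by (simp_all add: space_prob_algebra sets_eq_imp_space_eq[of P F]
        sets_eq_imp_space_eq[of Q F] prob_space_def)
  have "(\<integral>x. f x \<partial>P) \<le> (\<integral>x. s x + 1 / real n \<partial>P)"
    using int_P s_ge space_P \<open>finite_measure P\<close>
    by (intro integral_mono) (auto simp: finite_measure.integrable_const algebra_simps)
  also have "\<dots> = (\<integral>x. s x \<partial>P) + 1 / real n"
    using int_P \<open>finite_measure P\<close> P
    by (simp add: finite_measure.integrable_const space_prob_algebra prob_space.prob_space)
  also have "(\<integral>x. s x \<partial>P) \<le> exp \<epsilon> * (\<integral>x. s x \<partial>Q) + \<delta>"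
    using integral_sum_indicator_le_of_indist_le[OF P Q PQ, of "{1..n}" S] n
    by (simp add: s_def field_simps)
  also have "(\<integral>x. s x \<partial>Q) \<le> (\<integral>x. f x \<partial>Q)"
    using int_Q s_le space_Q by (intro integral_mono) auto
  finally show ?thesis
    by simp
qed

lemma integral_le_of_indist_le:
  fixes f :: "'a \<Rightarrow> real"
  assumes "P \<in> space (prob_algebra F)" "Q \<in> space (prob_algebra F)"
    and "indist_le \<epsilon> \<delta> F P Q"
    and "f \<in> borel_measurable F" "\<And>x. x \<in> space F \<Longrightarrow> 0 \<le> f x \<and> f x \<le> 1"
  shows "(\<integral>x. f x \<partial>P) \<le> exp \<epsilon> * (\<integral>x. f x \<partial>Q) + \<delta>"
proof (rule field_le_epsilon)
  fix e :: real assume "0 < e"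
  then obtain n :: nat where n: "n > 0" "inverse (real n) < e"
    using ex_inverse_of_nat_less by blast
  have "(\<integral>x. f x \<partial>P) \<le> exp \<epsilon> * (\<integral>x. f x \<partial>Q) + \<delta> + 1 / real n"
    by (rule integral_le_of_indist_le_approx[OF assms n(1)])
  with n(2) show "(\<integral>x. f x \<partial>P) \<le> exp \<epsilon> * (\<integral>x. f x \<partial>Q) + \<delta> + e"
    by (simp add: inverse_eq_divide)
qed

lemma integral_le_of_indist_le_pointwise:
  fixes r k :: "'a \<Rightarrow> real"
  assumes P: "P \<in> space (prob_algebra F)" and Q: "Q \<in> space (prob_algebra F)"
    and PQ: "indist_le \<epsilon>1 \<delta>1 F P Q"
    and r[measurable]: "r \<in> borel_measurable F" and k[measurable]: "k \<in> borel_measurable F"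
    and r_range: "\<And>x. x \<in> space F \<Longrightarrow> 0 \<le> r x \<and> r x \<le> 1"
    and k_range: "\<And>x. x \<in> space F \<Longrightarrow> 0 \<le> k x \<and> k x \<le> 1"
    and rk: "\<And>x. x \<in> space F \<Longrightarrow> r x \<le> exp \<epsilon>2 * k x + \<delta>2" and "0 \<le> \<delta>2"
  shows "(\<integral>x. r x \<partial>P) \<le> exp (\<epsilon>1 + \<epsilon>2) * (\<integral>x. k x \<partial>Q) + \<delta>1 + \<delta>2"
proof -
  \<comment> \<open>Truncation at 1 makes m [0,1]-valued, as integral_le_of_indist_le requires;
    since r \<le> 1, the pointwise bound survives it.\<close>
  define m where "m x = min 1 (exp \<epsilon>2 * k x)" for x
  have m[measurable]: "m \<in> borel_measurable F"
    unfolding m_def by measurable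
  have m_range: "0 \<le> m x \<and> m x \<le> 1" if "x \<in> space F" for x
    using k_range[OF that] by (simp add: m_def)
  have integrable: "integrable \<mu> g"
    if "\<mu> \<in> space (prob_algebra F)" "g \<in> borel_measurable F" "\<And>x. x \<in> space F \<Longrightarrow> 0 \<le> g x \<and> g x \<le> 1"
    for \<mu> and g :: "'a \<Rightarrow> real"
    by (rule integrable_prob_algebra_bounded[OF that(1,2), where B=1]) (use that(3) in force)
  have space_P: "space P = space F" and space_Q: "space Q = space F" and "finite_measure P"
    using P Q by (simp_all add: space_prob_algebra sets_eq_imp_space_eq[of P F]
        sets_eq_imp_space_eq[of Q F] prob_space_def)
  have r_le_m: "r x \<le> m x + \<delta>2" if "x \<in> space F" for x
    using rk[OF that] r_range[OF that] \<open>0 \<le> \<delta>2\<close> unfolding m_def by (auto simp: min_def)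
  have "(\<integral>x. r x \<partial>P) \<le> (\<integral>x. m x + \<delta>2 \<partial>P)"
    using integrable[OF P r r_range] integrable[OF P m m_range] r_le_m space_P \<open>finite_measure P\<close>
    by (intro integral_mono) (simp_all add: finite_measure.integrable_const)
  also have "\<dots> = (\<integral>x. m x \<partial>P) + \<delta>2"
    using integrable[OF P m m_range] \<open>finite_measure P\<close> P
    by (simp add: finite_measure.integrable_const space_prob_algebra prob_space.prob_space)
  also have "(\<integral>x. m x \<partial>P) \<le> exp \<epsilon>1 * (\<integral>x. m x \<partial>Q) + \<delta>1"
    by (rule integral_le_of_indist_le[OF P Q PQ m m_range])
  also have "(\<integral>x. m x \<partial>Q) \<le> (\<integral>x. exp \<epsilon>2 * k x \<partial>Q)"
    using integrable[OF Q m m_range] integrable[OF Q k k_range] space_Q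
    by (intro integral_mono) (simp_all add: m_def)
  finally show ?thesis
    by (simp add: exp_add mult.assoc)
qed

lemma indist_le_bind:
  assumes P: "P \<in> space (prob_algebra F)" and Q: "Q \<in> space (prob_algebra F)"
    and R: "R \<in> F \<rightarrow>\<^sub>M prob_algebra N" and K: "K \<in> F \<rightarrow>\<^sub>M prob_algebra N"
    and PQ: "indist_le \<epsilon>1 \<delta>1 F P Q"
    and RK: "\<And>x. x \<in> space F \<Longrightarrow> indist_le \<epsilon>2 \<delta>2 N (R x) (K x)"
  shows "indist_le (\<epsilon>1 + \<epsilon>2) (\<delta>1 + \<delta>2) N (P \<bind> R) (Q \<bind> K)"
  unfolding indist_le_def
proof
  fix T assume T: "T \<in> sets N"
  have "space F \<noteq> {}"
    using P prob_space.not_empty[of P] sets_eq_imp_space_eq[of P F] by (auto simp: space_prob_algebra)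
  then have "0 \<le> \<delta>2"
    using RK indist_le_nonneg by blast
  have range: "0 \<le> measure (L x) T \<and> measure (L x) T \<le> 1"
    if "L \<in> F \<rightarrow>\<^sub>M prob_algebra N" "x \<in> space F" for L :: "'a \<Rightarrow> 'b measure" and x
    using measurable_space[OF that] by (simp add: space_prob_algebra prob_space.prob_le_1)
  have "(\<integral>x. measure (R x) T \<partial>P) \<le> exp (\<epsilon>1 + \<epsilon>2) * (\<integral>x. measure (K x) T \<partial>Q) + \<delta>1 + \<delta>2"
    using RK T \<open>0 \<le> \<delta>2\<close> range[OF R] range[OF K]
    by (intro integral_le_of_indist_le_pointwise[OF P Q PQ])
       (auto intro: measurable_compose[OF R] measurable_compose[OF K] simp: indist_le_def)
  then show "measure (P \<bind> R) T \<le> exp (\<epsilon>1 + \<epsilon>2) * measure (Q \<bind> K) T + (\<delta>1 + \<delta>2)"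
    by (simp add: measure_bind_prob_algebra[OF P R T] measure_bind_prob_algebra[OF Q K T])
qed

lemma full_training_eq_bind:
  "full_training F N Phi A D = Phi D \<bind> (\<lambda>phi. distr (A D phi) (F \<Otimes>\<^sub>M N) (Pair phi))"
  by (simp add: full_training_def)

lemma measurable_distr_Pair:
  assumes "A \<in> F \<rightarrow>\<^sub>M prob_algebra N"
  shows "(\<lambda>phi. distr (A phi) (F \<Otimes>\<^sub>M N) (Pair phi)) \<in> F \<rightarrow>\<^sub>M prob_algebra (F \<Otimes>\<^sub>M N)"
  by (rule measurable_distr_prob_space2[OF assms]) (simp add: id_def)

lemma distr_full_training_full_removal:
  assumes Phi: "Phi D \<in> space (prob_algebra F)" and A: "A D \<in> F \<rightarrow>\<^sub>M prob_algebra N"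
    and M: "(\<lambda>(phi, w). M phi w D x) \<in> F \<Otimes>\<^sub>M N \<rightarrow>\<^sub>M N"
  shows "distr (full_training F N Phi A D) (F \<Otimes>\<^sub>M N) (\<lambda>h. full_removal M h D x)
      = Phi D \<bind> (\<lambda>phi. distr (A D phi) (F \<Otimes>\<^sub>M N) (\<lambda>w. (phi, M phi w D x)))"
proof -
  have sets_Phi: "sets (Phi D) = sets F" and "space (Phi D) \<noteq> {}"
    using Phi by (auto simp: space_prob_algebra prob_space.not_empty)
  have removal: "(\<lambda>h. full_removal M h D x) \<in> F \<Otimes>\<^sub>M N \<rightarrow>\<^sub>M F \<Otimes>\<^sub>M N"
    using measurable_Pair[OF measurable_fst M] by (simp add: full_removal_def split_beta')
  have K: "(\<lambda>phi. distr (A D phi) (F \<Otimes>\<^sub>M N) (Pair phi)) \<in> F \<rightarrow>\<^sub>M subprob_algebra (F \<Otimes>\<^sub>M N)"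
    by (rule measurable_prob_algebraD[OF measurable_distr_Pair[OF A]])
  have "distr (full_training F N Phi A D) (F \<Otimes>\<^sub>M N) (\<lambda>h. full_removal M h D x)
      = Phi D \<bind> (\<lambda>phi. distr (distr (A D phi) (F \<Otimes>\<^sub>M N) (Pair phi)) (F \<Otimes>\<^sub>M N)
                      (\<lambda>h. full_removal M h D x))"
    unfolding full_training_eq_bind using K \<open>space (Phi D) \<noteq> {}\<close> removal
    by (intro distr_bind) (simp_all cong: measurable_cong_sets[OF sets_Phi refl])
  also have "\<dots> = Phi D \<bind> (\<lambda>phi. distr (A D phi) (F \<Otimes>\<^sub>M N) (\<lambda>w. (phi, M phi w D x)))"
  proof (rule bind_cong[OF refl])
    fix phi assume "phi \<in> space (Phi D)"
    then have "Pair phi \<in> A D phi \<rightarrow>\<^sub>M F \<Otimes>\<^sub>M N"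
      using measurable_space[OF A, of phi] sets_eq_imp_space_eq[OF sets_Phi]
      by (simp add: space_prob_algebra cong: measurable_cong_sets)
    from distr_distr[OF removal this]
    show "distr (distr (A D phi) (F \<Otimes>\<^sub>M N) (Pair phi)) (F \<Otimes>\<^sub>M N) (\<lambda>h. full_removal M h D x)
        = distr (A D phi) (F \<Otimes>\<^sub>M N) (\<lambda>w. (phi, M phi w D x))"
      by (simp add: comp_def full_removal_def)
  qed
  finally show ?thesis .
qed

lemma certified_removal_imp_indist_le_Pair:
  assumes CR: "certified_removal \<epsilon> \<delta> N A M" and sets_A: "\<And>D. sets (A D) = sets N"
    and M: "(\<lambda>w. M w D x) \<in> N \<rightarrow>\<^sub>M N" and phi: "phi \<in> space F" and "x \<in># D"
  shows "indist_le \<epsilon> \<delta> (F \<Otimes>\<^sub>M N)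
           (distr (A D) (F \<Otimes>\<^sub>M N) (\<lambda>w. (phi, M w D x))) (distr (A (D - {#x#})) (F \<Otimes>\<^sub>M N) (Pair phi))"
    and "indist_le \<epsilon> \<delta> (F \<Otimes>\<^sub>M N)
           (distr (A (D - {#x#})) (F \<Otimes>\<^sub>M N) (Pair phi)) (distr (A D) (F \<Otimes>\<^sub>M N) (\<lambda>w. (phi, M w D x)))"
proof -
  have "distr (A D) (F \<Otimes>\<^sub>M N) (\<lambda>w. (phi, M w D x))
      = distr (distr (A D) N (\<lambda>w. M w D x)) (F \<Otimes>\<^sub>M N) (Pair phi)"
    using M phi sets_A by (simp add: distr_distr comp_def cong: measurable_cong_sets)
  moreover have "Pair phi \<in> N \<rightarrow>\<^sub>M F \<Otimes>\<^sub>M N"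
    using phi by simp
  ultimately show "indist_le \<epsilon> \<delta> (F \<Otimes>\<^sub>M N)
           (distr (A D) (F \<Otimes>\<^sub>M N) (\<lambda>w. (phi, M w D x))) (distr (A (D - {#x#})) (F \<Otimes>\<^sub>M N) (Pair phi))"
    and "indist_le \<epsilon> \<delta> (F \<Otimes>\<^sub>M N)
           (distr (A (D - {#x#})) (F \<Otimes>\<^sub>M N) (Pair phi)) (distr (A D) (F \<Otimes>\<^sub>M N) (\<lambda>w. (phi, M w D x)))"
    using CR \<open>x \<in># D\<close> unfolding certified_removal_iff_indist_le
    by (auto intro: indist_le_distr[OF _ sets_distr sets_A] indist_le_distr[OF _ sets_A sets_distr])
qed

theorem certified_removal_full_training:
  fixes Phi :: "'z multiset \<Rightarrow> 'p measure"
  assumes Phi_prob: "\<And>D. Phi D \<in> space (prob_algebra F)"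
    and Phi_DP: "differentially_private \<epsilon>DP \<delta>DP F Phi"
    and A_kernel: "\<And>D. A D \<in> F \<rightarrow>\<^sub>M prob_algebra N"
    and M_meas: "\<And>D x. (\<lambda>(phi, w). M phi w D x) \<in> F \<Otimes>\<^sub>M N \<rightarrow>\<^sub>M N"
    and M_CR: "\<And>phi. phi \<in> space F \<Longrightarrow>
                 certified_removal \<epsilon>CR \<delta>CR N (\<lambda>D. A D phi) (\<lambda>w D x. M phi w D x)"
  shows "certified_removal (\<epsilon>DP + \<epsilon>CR) (\<delta>DP + \<delta>CR) (F \<Otimes>\<^sub>M N)
           (full_training F N Phi A) (full_removal M)"
  unfolding certified_removal_iff_indist_le
proof (intro allI impI)
  fix D :: "'z multiset" and x assume "x \<in># D"
  define D' where "D' = D - {#x#}"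
  have "neighbors D D'" "neighbors D' D"
    using \<open>x \<in># D\<close> by (auto simp: neighbors_def D'_def intro: exI[of _ x])
  with Phi_DP have DP: "indist_le \<epsilon>DP \<delta>DP F (Phi D) (Phi D')" "indist_le \<epsilon>DP \<delta>DP F (Phi D') (Phi D)"
    by (simp_all add: differentially_private_iff_indist_le)
  define K where "K phi = distr (A D' phi) (F \<Otimes>\<^sub>M N) (Pair phi)" for phi
  define R where "R phi = distr (A D phi) (F \<Otimes>\<^sub>M N) (\<lambda>w. (phi, M phi w D x))" for phi
  have K: "K \<in> F \<rightarrow>\<^sub>M prob_algebra (F \<Otimes>\<^sub>M N)"
    unfolding K_def by (rule measurable_distr_Pair[OF A_kernel])
  have R: "R \<in> F \<rightarrow>\<^sub>M prob_algebra (F \<Otimes>\<^sub>M N)"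
    unfolding R_def using A_kernel M_meas by measurable
  have CR: "indist_le \<epsilon>CR \<delta>CR (F \<Otimes>\<^sub>M N) (R phi) (K phi)"
    "indist_le \<epsilon>CR \<delta>CR (F \<Otimes>\<^sub>M N) (K phi) (R phi)" if phi: "phi \<in> space F" for phi
    using measurable_space[OF A_kernel phi] measurable_Pair2[OF M_meas phi] \<open>x \<in># D\<close>
    unfolding R_def K_def D'_def
    by (auto simp: space_prob_algebra intro!: certified_removal_imp_indist_le_Pair[OF M_CR[OF phi] _ _ phi])
  have removal: "distr (full_training F N Phi A D) (F \<Otimes>\<^sub>M N) (\<lambda>h. full_removal M h D x) = Phi D \<bind> R"
    unfolding R_def by (rule distr_full_training_full_removal[OF Phi_prob A_kernel M_meas])
  have retraining: "full_training F N Phi A D' = Phi D' \<bind> K"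
    unfolding K_def by (rule full_training_eq_bind)
  show "indist_le (\<epsilon>DP + \<epsilon>CR) (\<delta>DP + \<delta>CR) (F \<Otimes>\<^sub>M N)
      (distr (full_training F N Phi A D) (F \<Otimes>\<^sub>M N) (\<lambda>h. full_removal M h D x))
      (full_training F N Phi A (D - {#x#})) \<and>
    indist_le (\<epsilon>DP + \<epsilon>CR) (\<delta>DP + \<delta>CR) (F \<Otimes>\<^sub>M N)
      (full_training F N Phi A (D - {#x#}))
      (distr (full_training F N Phi A D) (F \<Otimes>\<^sub>M N) (\<lambda>h. full_removal M h D x))"
    unfolding D'_def[symmetric] removal retraining
    using CR by (blast intro: indist_le_bind[OF Phi_prob Phi_prob R K DP(1)]
        indist_le_bind[OF Phi_prob Phi_prob K R DP(2)])
qed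

theorem theorem5:
  fixes F :: "('x \<Rightarrow> 'f::euclidean_space) measure"
    and Phi :: "('x \<times> 'y) multiset \<Rightarrow> ('x \<Rightarrow> 'f) measure"
    and A :: "('x \<times> 'y) multiset \<Rightarrow> ('x \<Rightarrow> 'f) \<Rightarrow> 'f measure"
    and M :: "('x \<Rightarrow> 'f) \<Rightarrow> 'f \<Rightarrow> ('x \<times> 'y) multiset \<Rightarrow> ('x \<times> 'y) \<Rightarrow> 'f"
    and loss :: "real \<Rightarrow> 'y \<Rightarrow> real"
    and lam :: real
    and \<beta> :: "'f measure"
    and \<epsilon>DP \<delta>DP \<epsilon>CR \<delta>CR :: real
  assumes Phi_prob: "\<And>D. Phi D \<in> space (prob_algebra F)"
    and Phi_DP: "differentially_private \<epsilon>DP \<delta>DP F Phi"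
    and A_kernel: "\<And>D. A D \<in> F \<rightarrow>\<^sub>M prob_algebra borel"
    and A_def: "\<And>D phi. phi \<in> space F \<Longrightarrow>
                  A D phi = distr \<beta> borel (perturbed_minimizer loss lam phi D)"
    and M_meas: "\<And>D x. (\<lambda>(phi, w). M phi w D x) \<in> F \<Otimes>\<^sub>M borel \<rightarrow>\<^sub>M borel"
    and M_CR: "\<And>phi. phi \<in> space F \<Longrightarrow>
                 certified_removal \<epsilon>CR \<delta>CR borel (\<lambda>D. A D phi) (\<lambda>w D x. M phi w D x)"
  shows "certified_removal (\<epsilon>DP + \<epsilon>CR) (\<delta>DP + \<delta>CR) (F \<Otimes>\<^sub>M borel)
           (full_training F borel Phi A) (full_removal M)"
  using Phi_prob Phi_DP A_kernel M_meas M_CR by (rule certified_removal_full_training)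

end
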